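(* There exist absolute constants $\lambda,C>0$ with the following property. Let $t\ge 1$, let $w_1,\dots,w_t>0$ be fixed weights, and let $W=\sum_{i=1}^t w_i$. Fix $\ell\in[t]$ and assume $w_i\le\frac{1}{2\ell}W$ for all $i\in[t]$. Let $t_1,\dots,t_t$ be i.i.d. exponential random variables with rate $1$, and set $v_i=w_i/t_i$. Let $D(1),\dots,D(t)$ be the anti-ranks, i.e. the random indices with $v_{D(1)}\ge v_{D(2)}\ge\dots\ge v_{D(t)}$. Then for every $c\ge 1/2$, $$\Pr\!\left[v_{D(\ell)}\le\frac{W}{c\,\ell}\right]\le\lambda e^{-Cc}.$$
   Context: An exponential random variable with rate $1$ has density $e^{-x}$ for $x\ge 0$. The anti-ranks are almost surely uniquely defined. *)

theory Defs
  imports "HOL-Probability.Probability"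
begin

text \<open>The \<open>k\<close>-th largest of the values \<open>v 1, ..., v t\<close> (for \<open>1 \<le> k \<le> t\<close>),
  i.e. \<open>v (D k)\<close> where \<open>D\<close> are the anti-ranks (\<open>v (D 1) \<ge> ... \<ge> v (D t)\<close>).
  This value does not depend on how ties are broken.\<close>
definition kth_largest :: "(nat \<Rightarrow> real) \<Rightarrow> nat \<Rightarrow> nat \<Rightarrow> real" where
  "kth_largest v t k = rev (sort (map v [1..<t+1])) ! (k - 1)"

definition exp_iid_space :: "nat \<Rightarrow> (nat \<Rightarrow> real) measure" where
  "exp_iid_space t = PiM {1..t} (\<lambda>_. density lborel (exponential_density 1))"

end

theory Submission
  imports Defs
begin

text \<open>The event says that \<open>t\<^sub>i < a\<^sub>i := c l w\<^sub>i / W\<close> for at most \<open>l - 1\<close> indices,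
  where \<open>\<Sum>a\<^sub>i = c l\<close> and \<open>a\<^sub>i \<le> c/2\<close>. For \<open>u = exp (-c/2)\<close> its indicator is at most
  \<open>u\<^sup>1\<^sup>-\<^sup>l\<close> times the product of \<open>u\<close> over the indices with \<open>t\<^sub>i < a\<^sub>i\<close>, whose expectation is
  \<open>u\<^sup>1\<^sup>-\<^sup>l \<Prod>(u + (1-u) exp (-a\<^sub>i))\<close> by independence. As \<open>a \<mapsto> u + (1-u) exp (-a)\<close> is
  log-convex, each factor is at most \<open>(u + (1-u) u) powr (2a\<^sub>i/c) \<le> (2u) powr (2a\<^sub>i/c)\<close>, so the
  probability is at most \<open>u\<^sup>1\<^sup>-\<^sup>l (2u)\<^sup>2\<^sup>l = u (4u)\<^sup>l\<close>, which is at most \<open>4u\<close> when \<open>4u \<le> 1\<close>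
  and trivially otherwise.\<close>

lemma card_gt_kth_largest_le:
  fixes v :: "nat \<Rightarrow> real"
  assumes "1 \<le> l" "l \<le> t" and "kth_largest v t l \<le> T"
  shows "card {i\<in>{1..t}. T < v i} \<le> l - 1"
proof -
  define xs where "xs = rev (sort (map v [1..<t+1]))"
  have sorted: "sorted (rev xs)" by (simp add: xs_def)
  have kth: "xs ! (l-1) \<le> T" using assms(3) by (simp add: kth_largest_def xs_def)
  have "\<not> T < x" if x: "x \<in> set (drop (l-1) xs)" for x
  proof -
    obtain j where "j < length (drop (l-1) xs)" "x = drop (l-1) xs ! j"
      using x unfolding in_set_conv_nth by blast
    then have "x \<le> xs ! (l-1)" using sorted_rev_nth_mono[OF sorted] by simp
    then show ?thesis using kth by simp
  qed
  then have "filter (\<lambda>x. T < x) xs = filter (\<lambda>x. T < x) (take (l-1) xs)"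
    by (metis append_Nil2 append_take_drop_id filter_append filter_False)
  then have "length (filter (\<lambda>x. T < x) xs) \<le> l - 1"
    by (metis length_filter_le length_take min.bounded_iff)
  moreover have "length (filter (\<lambda>x. T < x) xs) = length (filter (\<lambda>x. T < x) (map v [1..<t+1]))"
    unfolding xs_def by (metis mset_filter size_mset mset_rev mset_sort)
  moreover have "\<dots> = card {i\<in>{1..t}. T < v i}"
    by (simp add: filter_map o_def distinct_length_filter) (auto intro: arg_cong[where f=card])
  ultimately show ?thesis by simp
qed

lemma exp_mixture_le_powr:
  fixes a M u :: real
  assumes "0 \<le> a" "a \<le> M" "0 < u" "u < 1"
  shows "u + (1-u) * exp (-a) \<le> (u + (1-u) * exp (-M)) powr (a/M)"
proof -
  define \<theta> where "\<theta> = a / M"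
  define X where "X = u + (1-u) * exp (-M)"
  \<comment> \<open>Hoelder's inequality for the two-point measure with weights \<open>u, 1-u\<close>: Young's inequality
    on each summand, normalised by \<open>X\<close>.\<close>
  have \<theta>: "0 \<le> \<theta>" "\<theta> \<le> 1" using assms by (auto simp: \<theta>_def divide_le_eq_1)
  have X: "X > 0" using assms by (simp add: X_def add_pos_nonneg)
  have "u / X powr \<theta> = (u/X) powr \<theta> * u powr (1-\<theta>)"
    using assms X by (simp add: powr_divide powr_add[symmetric])
  also have "\<dots> \<le> \<theta> * (u/X) + (1-\<theta>) * u"
    by (rule Youngs_inequality_0) (use \<theta> assms X in auto)
  finally have young1: "u / X powr \<theta> \<le> \<theta> * (u/X) + (1-\<theta>) * u" .
  have "exp (-M) powr \<theta> = exp (-a)"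
    using assms by (cases "M = 0") (auto simp: powr_def \<theta>_def)
  then have "(1-u) * exp (-a) / X powr \<theta> = ((1-u)*exp(-M)/X) powr \<theta> * (1-u) powr (1-\<theta>)"
    using assms X by (simp add: powr_divide powr_mult powr_add[symmetric])
  also have "\<dots> \<le> \<theta> * ((1-u)*exp(-M)/X) + (1-\<theta>) * (1-u)"
    by (rule Youngs_inequality_0) (use \<theta> assms X in auto)
  finally have young2: "(1-u) * exp (-a) / X powr \<theta> \<le> \<theta> * ((1-u)*exp(-M)/X) + (1-\<theta>) * (1-u)" .
  have "(u + (1-u) * exp (-a)) / X powr \<theta> = u / X powr \<theta> + (1-u) * exp (-a) / X powr \<theta>"
    by (simp add: add_divide_distrib)
  also have "\<dots> \<le> \<theta> * (u/X + (1-u)*exp(-M)/X) + (1-\<theta>) * (u + (1-u))"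
    unfolding distrib_left using young1 young2 by linarith
  also have "u/X + (1-u)*exp(-M)/X = 1"
    using X by (simp add: X_def add_divide_distrib[symmetric])
  finally have "(u + (1-u) * exp (-a)) / X powr \<theta> \<le> 1" by simp
  then show ?thesis using X by (simp add: X_def \<theta>_def divide_le_eq)
qed

lemma prod_exp_mixture_le_pow:
  fixes a :: "'i \<Rightarrow> real" and M :: real
  assumes "finite I" "\<And>i. i \<in> I \<Longrightarrow> 0 \<le> a i \<and> a i \<le> M" "0 < M"
    and sum_a: "(\<Sum>i\<in>I. a i) = real k * M"
  shows "(\<Prod>i\<in>I. exp (-M) + (1 - exp (-M)) * exp (- a i)) \<le> (2 * exp (-M)) ^ k"
proof -
  define u where "u = exp (-M)"
  have u: "0 < u" "u < 1" using \<open>0 < M\<close> by (auto simp: u_def)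
  have X: "0 < u + (1-u) * u" using u by (simp add: add_pos_nonneg)
  have "(\<Prod>i\<in>I. u + (1-u) * exp (- a i)) \<le> (\<Prod>i\<in>I. (u + (1-u) * u) powr (a i / M))"
    using assms u exp_mixture_le_powr by (intro prod_mono) (auto simp: u_def)
  also have "\<dots> = (u + (1-u) * u) powr ((\<Sum>i\<in>I. a i) / M)"
    using X \<open>finite I\<close> by (simp add: powr_sum sum_divide_distrib)
  also have "\<dots> = (u + (1-u) * u) ^ k"
    using X sum_a \<open>0 < M\<close> by (simp add: powr_realpow)
  also have "\<dots> \<le> (2 * u) ^ k"
    using u X by (intro power_mono) (auto simp: mult_left_le_one_le)
  finally show ?thesis by (simp add: u_def)
qed

lemma measure_exponential_density_Ioo:
  assumes "0 \<le> a"
  shows "measure (density lborel (exponential_density 1)) {0<..<a} = 1 - exp (-a)"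
proof -
  let ?E = "density lborel (exponential_density 1)"
  interpret prob_space ?E by (rule prob_space_exponential_density) simp
  have "AE y in lborel. y \<noteq> 0 \<and> y \<noteq> a"
    using AE_lborel_singleton[of 0] AE_lborel_singleton[of a] by eventually_elim simp
  then have "AE y in ?E. y \<in> {0<..<a} \<longleftrightarrow> y \<in> {..a}"
    by (subst AE_density) (auto simp: exponential_density_def)
  then have "measure ?E {0<..<a} = measure ?E {..a}"
    by (intro measure_eq_AE) auto
  also have "\<dots> = 1 - exp (-a)"
    using assms emeasure_erlang_density[of 1 0 a] by (simp add: erlang_CDF_0 measure_def)
  finally show ?thesis .
qed

lemma prod_if_card_le_scaled:
  fixes u :: real
  assumes "finite I" "0 < u" "u \<le> 1" "card {i\<in>I. P i} \<le> m"
  shows "1 \<le> (1/u)^m * (\<Prod>i\<in>I. if P i then u else 1)"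
proof -
  have "(\<Prod>i\<in>I. if P i then u else 1) = u ^ card {i\<in>I. P i}"
    using \<open>finite I\<close> by (simp add: prod.If_cases Collect_conj_eq)
  moreover have "u ^ m \<le> u ^ card {i\<in>I. P i}" using assms by (intro power_decreasing) auto
  ultimately show ?thesis using assms by (simp add: field_simps)
qed

lemma (in prob_space) nn_integral_if_mem:
  assumes "A \<in> events" "0 \<le> u"
  shows "(\<integral>\<^sup>+y. ennreal (if y \<in> A then u else 1) \<partial>M) = ennreal (1 - (1-u) * prob A)"
proof -
  have "(\<integral>\<^sup>+y. ennreal (if y \<in> A then u else 1) \<partial>M)
      = (\<integral>\<^sup>+y. ennreal u * indicator A y + indicator (space M - A) y \<partial>M)"
    by (intro nn_integral_cong) (auto simp: indicator_def)
  also have "\<dots> = ennreal u * emeasure M A + emeasure M (space M - A)"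
    using assms by (simp add: nn_integral_add nn_integral_cmult_indicator)
  also have "\<dots> = ennreal (u * prob A + (1 - prob A))"
    using assms by (simp add: emeasure_eq_measure prob_compl ennreal_mult)
  finally show ?thesis by (simp add: algebra_simps)
qed

lemma (in prob_space) measure_PiM_card_hits_le:
  fixes A :: "'i \<Rightarrow> 'a set" and E :: "('i \<Rightarrow> 'a) set"
  assumes "finite I" and A: "\<And>i. i \<in> I \<Longrightarrow> A i \<in> events" and u: "0 < u" "u \<le> 1"
    and few: "\<And>x. x \<in> E \<Longrightarrow> card {i\<in>I. x i \<in> A i} \<le> m"
  shows "measure (PiM I (\<lambda>_. M)) E \<le> (1/u)^m * (\<Prod>i\<in>I. 1 - (1-u) * prob (A i))"
proof -
  let ?P = "PiM I (\<lambda>_. M)"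
  interpret product_sigma_finite "\<lambda>_. M"
    by (simp add: product_sigma_finite_def sigma_finite_measure_axioms)
  interpret P: prob_space ?P by (rule prob_space_PiM) (rule prob_space_axioms)
  define h where "h i y = ennreal (if y \<in> A i then u else 1)" for i y
  have h_meas: "h i \<in> borel_measurable M" if "i \<in> I" for i
    using A[OF that] unfolding h_def by measurable
  have nn_integral_h: "integral\<^sup>N M (h i) = ennreal (1 - (1-u) * prob (A i))" if "i \<in> I" for i
    using A[OF that] u unfolding h_def[abs_def] by (simp add: nn_integral_if_mem)
  have factor_nonneg: "0 \<le> 1 - (1-u) * prob (A i)" for i
    using u prob_le_1[of "A i"] mult_le_one[of "1-u" "prob (A i)"] by simp
  then have bound_prod_nonneg: "0 \<le> (\<Prod>i\<in>I. 1 - (1-u) * prob (A i))"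
    by (simp add: prod_nonneg)
  have indicator_le: "indicator E x \<le> ennreal ((1/u)^m) * (\<Prod>i\<in>I. h i (x i))" for x
  proof (cases "x \<in> E")
    case True
    let ?p = "\<Prod>i\<in>I. if x i \<in> A i then u else 1"
    have "1 \<le> (1/u)^m * ?p"
      using \<open>finite I\<close> u few[OF True] by (rule prod_if_card_le_scaled)
    moreover have "(\<Prod>i\<in>I. h i (x i)) = ennreal ?p"
      unfolding h_def using u by (subst prod_ennreal) auto
    moreover have "0 \<le> ?p" using u by (simp add: prod_nonneg)
    ultimately show ?thesis
      using True u by (simp add: ennreal_mult[symmetric] ennreal_leI)
  qed simp
  have "emeasure ?P E \<le> (\<integral>\<^sup>+x. ennreal ((1/u)^m) * (\<Prod>i\<in>I. h i (x i)) \<partial>?P)"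
  proof (cases "E \<in> sets ?P")
    case True
    then have "emeasure ?P E = (\<integral>\<^sup>+x. indicator E x \<partial>?P)" by simp
    also have "\<dots> \<le> (\<integral>\<^sup>+x. ennreal ((1/u)^m) * (\<Prod>i\<in>I. h i (x i)) \<partial>?P)"
      using indicator_le by (intro nn_integral_mono)
    finally show ?thesis .
  qed (simp add: emeasure_notin_sets)
  also have "\<dots> = ennreal ((1/u)^m) * (\<Prod>i\<in>I. integral\<^sup>N M (h i))"
    using \<open>finite I\<close> h_meas by (simp add: nn_integral_cmult product_nn_integral_prod)
  also have "\<dots> = ennreal ((1/u)^m) * (\<Prod>i\<in>I. ennreal (1 - (1-u) * prob (A i)))"
    using nn_integral_h by simp
  also have "\<dots> = ennreal ((1/u)^m * (\<Prod>i\<in>I. 1 - (1-u) * prob (A i)))"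
    using u factor_nonneg bound_prod_nonneg by (simp add: prod_ennreal ennreal_mult)
  finally show ?thesis
    using u bound_prod_nonneg by (simp add: P.emeasure_eq_measure)
qed

lemma card_below_threshold_le:
  fixes w x :: "nat \<Rightarrow> real"
  assumes "1 \<le> l" "l \<le> t" "\<And>i. i \<in> {1..t} \<Longrightarrow> 0 < w i" "0 < T"
    and "kth_largest (\<lambda>i. w i / x i) t l \<le> T"
  shows "card {i\<in>{1..t}. x i \<in> {0<..<w i / T}} \<le> l - 1"
proof -
  have "x i \<in> {0<..<w i / T} \<longleftrightarrow> T < w i / x i" if "i \<in> {1..t}" for i
  proof (cases "0 < x i")
    case True
    then show ?thesis using \<open>0 < T\<close> by (auto simp: field_simps)
  next
    case False
    then have "w i / x i \<le> 0" using assms(3)[OF that] by (simp add: divide_nonneg_nonpos)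
    then show ?thesis using False \<open>0 < T\<close> by auto
  qed
  then have "{i\<in>{1..t}. x i \<in> {0<..<w i / T}} = {i\<in>{1..t}. T < w i / x i}" by blast
  then show ?thesis using card_gt_kth_largest_le assms(1,2,5) by simp
qed

lemma min_one_scaled_power_le:
  fixes u :: real
  assumes "0 < u" "1 \<le> l"
  shows "min 1 ((1/u)^(l-1) * (2*u)^(2*l)) \<le> 4 * u"
proof (cases "4 * u \<le> 1")
  case True
  obtain k where l: "l = Suc k" using \<open>1 \<le> l\<close> by (cases l) auto
  have "(1/u)^(l-1) * (2*u)^(2*l) = u * (4*u)^k * (4*u)"
  proof -
    have "(4::real)^k = 2^k * 2^k" by (simp flip: power_mult_distrib)
    then show ?thesis
      using assms by (simp add: l power_mult field_simps power2_eq_square)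
  qed
  also have "\<dots> \<le> 4 * u"
  proof -
    have "(4*u)^k \<le> 1" using True assms by (intro power_le_one) auto
    then have "u * (4*u)^k \<le> 1" using True assms mult_le_one[of u "(4*u)^k"] by auto
    then show ?thesis using assms by (intro mult_left_le_one_le) auto
  qed
  finally show ?thesis by simp
qed simp

lemma prob_kth_largest_le_exp_bound:
  fixes t l :: nat and w :: "nat \<Rightarrow> real" and c :: real
  assumes w_pos: "\<forall>i\<in>{1..t}. w i > 0" and l: "l \<in> {1..t}"
    and w_le: "\<forall>i\<in>{1..t}. w i \<le> (\<Sum>j=1..t. w j) / (2 * real l)" and c: "c \<ge> 1/2"
  shows "measure (exp_iid_space t)
         {x \<in> space (exp_iid_space t).
            kth_largest (\<lambda>i. w i / x i) t l \<le> (\<Sum>j=1..t. w j) / (c * real l)}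
       \<le> 4 * exp (- c / 2)"
    (is "measure _ ?E \<le> _")
proof -
  define W where "W = (\<Sum>j=1..t. w j)"
  define T where "T = W / (c * real l)"
  define a where "a i = w i / T" for i
  define u where "u = exp (- (c/2))"
  have W: "W > 0" unfolding W_def using l w_pos by (intro sum_pos) auto
  have T: "T > 0" using W c l by (simp add: T_def)
  have u: "0 < u" "u < 1" using c by (auto simp: u_def)
  have a: "0 \<le> a i \<and> a i \<le> c / 2" if "i \<in> {1..t}" for i
  proof -
    have "0 < w i" "2 * real l * w i \<le> W"
      using w_pos w_le that l by (auto simp: W_def field_simps)
    then show ?thesis using W c l mult_left_mono[of "2 * real l * w i" W c]
      by (auto simp: a_def T_def field_simps)
  qed
  have sum_a: "(\<Sum>i\<in>{1..t}. a i) = c * real l"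
  proof -
    have "(\<Sum>i\<in>{1..t}. a i) = W / T" by (simp add: a_def W_def sum_divide_distrib)
    then show ?thesis using W c l by (simp add: T_def)
  qed
  interpret Exp: prob_space "density lborel (exponential_density 1)"
    by (rule prob_space_exponential_density) simp
  have "measure (exp_iid_space t) ?E
      \<le> (1/u)^(l-1) * (\<Prod>i\<in>{1..t}. 1 - (1-u) * Exp.prob {0<..<a i})"
    unfolding exp_iid_space_def
    using l w_pos T u unfolding a_def
    by (intro Exp.measure_PiM_card_hits_le card_below_threshold_le) (auto simp: T_def W_def)
  also have "(\<Prod>i\<in>{1..t}. 1 - (1-u) * Exp.prob {0<..<a i}) = (\<Prod>i\<in>{1..t}. u + (1-u) * exp (- a i))"
    using a by (intro prod.cong) (auto simp: measure_exponential_density_Ioo algebra_simps)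
  also have "\<dots> \<le> (2 * u) ^ (2 * l)"
    using a c sum_a unfolding u_def by (intro prod_exp_mixture_le_pow) auto
  finally have "measure (exp_iid_space t) ?E \<le> min 1 ((1/u)^(l-1) * (2 * u) ^ (2 * l))"
    using Exp.prob_space_axioms u
    by (simp add: exp_iid_space_def prob_space.prob_le_1 prob_space_PiM mult_left_mono)
  also have "\<dots> \<le> 4 * u"
    using u l by (intro min_one_scaled_power_le) auto
  finally show ?thesis by (simp add: u_def)
qed

theorem proposition3p3:
  shows "\<exists>lam C :: real. lam > 0 \<and> C > 0 \<and>
    (\<forall>(t::nat) (w::nat \<Rightarrow> real) (l::nat) (c::real).
       t \<ge> 1 \<longrightarrow> (\<forall>i\<in>{1..t}. w i > 0) \<longrightarrow> l \<in> {1..t} \<longrightarrow>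
       (\<forall>i\<in>{1..t}. w i \<le> (\<Sum>j=1..t. w j) / (2 * real l)) \<longrightarrow> c \<ge> 1/2 \<longrightarrow>
       measure (exp_iid_space t)
         {x \<in> space (exp_iid_space t).
            kth_largest (\<lambda>i. w i / x i) t l \<le> (\<Sum>j=1..t. w j) / (c * real l)}
       \<le> lam * exp (- C * c))"
  using prob_kth_largest_le_exp_bound by (intro exI[of _ 4] exI[of _ "1/2"]) auto

end
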